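(* Let $G\in\mathbb{R}^{n_c\times n_z}$ have all rows nonzero, $S\in\mathbb{R}^{n_c\times n_x}$, $w\in\mathbb{R}^{n_c}$, and assume $\mathcal{V}=\{v\in\mathbb{R}^{n_x+n_z}: \bar Hv\le w\}\neq\emptyset$ where $\bar H=[-S,\;G]$. Let $i\in\{1,\dots,n_c\}$ and let $\sigma_i$ be as defined below. Then there is $M_0>0$ such that for every $M\ge M_0$, $$\sigma_i=\inf\Big\{r:\ v\in\mathcal{V},\ r\ge0,\ \delta\in\{0,1\}^{n_c},\ \frac{w_j-\bar H_jv}{\|\bar H_j\|}-M\delta_j<r\le\frac{w_j-\bar H_jv}{\|\bar H_j\|}+M(1-\delta_j)\ \forall j,\ \sum_{j=1}^{n_c}\delta_j<n_c-i\Big\},$$ i.e. $\sigma_i$ equals the optimal value of this mixed integer linear program (with $\inf\emptyset=+\infty$).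
   Context: $\bar H_j$ is the $j$-th row of $\bar H$, $w_j$ the $j$-th entry of $w$, $\mathcal{V}_j=\{v:\bar H_jv\le w_j\}$, $\mathcal{B}(v,r)$ the closed Euclidean ball. For $i\in\{1,\dots,n_c\}$, $\sigma_i=\sup\{r\ge0: \inf_{v\in\mathcal{V}}|\{j: \mathcal{B}(v,r)\subseteq\mathcal{V}_j\}|\ge n_c-i\}$ (possibly $+\infty$). The paper describes $M$ as "a big number"; the claim makes this precise as "for all sufficiently large $M$". *)

theory Defs
  imports "HOL-Analysis.Analysis" "HOL-Library.Extended_Real"
begin

text \<open>Points v of R^(n_x+n_z) are pairs (x,z) with x in R^n_x, z in R^n_z (the product
  carries the Euclidean inner product and norm). Rows are indexed by the finite type 'c,
  so n_c = CARD('c).\<close>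

definition Hbar_row :: "real^'x^'c \<Rightarrow> real^'z^'c \<Rightarrow> 'c \<Rightarrow> (real^'x) \<times> (real^'z)" where
  "Hbar_row S G j = (- (S $ j), G $ j)"

definition Vset :: "real^'x^'c \<Rightarrow> real^'z^'c \<Rightarrow> real^'c \<Rightarrow> ((real^'x) \<times> (real^'z)) set" where
  "Vset S G w = {v. \<forall>j. Hbar_row S G j \<bullet> v \<le> w $ j}"

definition Vj :: "real^'x^'c \<Rightarrow> real^'z^'c \<Rightarrow> real^'c \<Rightarrow> 'c \<Rightarrow> ((real^'x) \<times> (real^'z)) set" where
  "Vj S G w j = {v. Hbar_row S G j \<bullet> v \<le> w $ j}"

definition sigma :: "real^'x^'c \<Rightarrow> real^'z^'c \<Rightarrow> real^'c \<Rightarrow> nat \<Rightarrow> ereal" where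
  "sigma S G w i = Sup {ereal r | r. r \<ge> 0 \<and>
      (INF v\<in>Vset S G w. card {j. cball v r \<subseteq> Vj S G w j}) \<ge> CARD('c) - i}"

definition milp_val :: "real^'x^'c \<Rightarrow> real^'z^'c \<Rightarrow> real^'c \<Rightarrow> nat \<Rightarrow> real \<Rightarrow> ereal" where
  "milp_val S G w i M = Inf {ereal r | r v (\<delta> :: 'c \<Rightarrow> real).
      v \<in> Vset S G w \<and> r \<ge> 0 \<and> (\<forall>j. \<delta> j \<in> {0, 1}) \<and>
      (\<forall>j. (w $ j - Hbar_row S G j \<bullet> v) / norm (Hbar_row S G j) - M * \<delta> j < r \<and>
            r \<le> (w $ j - Hbar_row S G j \<bullet> v) / norm (Hbar_row S G j) + M * (1 - \<delta> j)) \<and>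
      (\<Sum>j\<in>UNIV. \<delta> j) < real (CARD('c) - i)}"

end

theory Submission
  imports Defs
begin

(* Write d_j(v) = (w_j - Hbar_j v) / |Hbar_j| for the slack of constraint j at v, so that
   B(v,r) is contained in V_j iff r <= d_j(v).  Then sigma_i is the supremum of the radii r
   at which every v in V has at least n_c - i indices with r <= d_j(v); as this set of radii
   is an initial segment of [0,oo), sigma_i is also the infimum of the complementary
   "failing" radii.  Every MILP-feasible r is failing, and conversely a failing radius
   r <= M witnessed by a point v with all d_j(v) < M is feasible, delta_j marking the
   indices with r <= d_j(v).  Such bounded witnesses suffice: if v witnesses r and
   K = {j. d_j(v) < r}, an optimal solution of the linear program
   min { s : s >= 0, v' in V, d_j(v') <= s for j in K }  witnesses every radius above its
   optimal value.  These finitely many programs attain their optima because linear images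
   of polyhedra are closed, and M_0 is chosen above all their solutions. *)

lemma halfspace_eventually_contains_shift:
  fixes x :: "nat \<Rightarrow> 'a::real_inner"
  assumes in_half: "\<And>n. a \<bullet> x n \<le> b"
    and N: "filterlim N at_top sequentially"
    and dir: "(\<lambda>n. x n /\<^sub>R N n) \<longlonglongrightarrow> u"
  shows "\<forall>\<^sub>F n in sequentially. a \<bullet> (x n - u) \<le> b"
proof -
  have N_pos: "\<forall>\<^sub>F n in sequentially. 0 < N n"
    using N by (simp add: filterlim_at_top_dense)
  have lim_au: "(\<lambda>n. a \<bullet> (x n /\<^sub>R N n)) \<longlonglongrightarrow> a \<bullet> u"
    by (intro tendsto_inner tendsto_const dir)
  have lim_b: "(\<lambda>n. b / N n) \<longlonglongrightarrow> 0"
    using tendsto_divide_0[OF tendsto_const filterlim_at_top_imp_at_infinity[OF N]] .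
  have "\<forall>\<^sub>F n in sequentially. a \<bullet> (x n /\<^sub>R N n) \<le> b / N n"
    using N_pos by eventually_elim (simp add: field_simps in_half)
  then have "a \<bullet> u \<le> 0"
    using tendsto_le[OF trivial_limit_sequentially lim_b lim_au] by simp
  then consider "a \<bullet> u = 0" | "a \<bullet> u < 0" by linarith
  then show ?thesis
  proof cases
    case 1
    then show ?thesis by (simp add: inner_diff_right in_half)
  next
    case 2
    have "filterlim (\<lambda>n. a \<bullet> (x n /\<^sub>R N n) * N n) at_bot sequentially"
      by (rule filterlim_tendsto_neg_mult_at_bot[OF lim_au 2 N])
    then have "\<forall>\<^sub>F n in sequentially. a \<bullet> (x n /\<^sub>R N n) * N n \<le> b + a \<bullet> u"
      by (simp add: filterlim_at_bot)
    with N_pos show ?thesis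
      by eventually_elim (simp add: inner_diff_right field_simps)
  qed
qed

lemma polyhedron_eventually_contains_shift:
  fixes S :: "'a::euclidean_space set"
  assumes "polyhedron S" and in_S: "\<And>n. x n \<in> S"
    and N: "filterlim N at_top sequentially"
    and dir: "(\<lambda>n. x n /\<^sub>R N n) \<longlonglongrightarrow> u"
  shows "\<forall>\<^sub>F n in sequentially. x n - u \<in> S"
proof -
  obtain F where "finite F" and S: "S = \<Inter> F"
    and halfspaces: "\<And>h. h \<in> F \<Longrightarrow> \<exists>a b. h = {x. a \<bullet> x \<le> b}"
    using \<open>polyhedron S\<close> unfolding polyhedron_def by metis
  have "\<forall>\<^sub>F n in sequentially. x n - u \<in> h" if hF: "h \<in> F" for h
  proof -
    obtain a b where h: "h = {x. a \<bullet> x \<le> b}" using halfspaces[OF hF] by blast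
    have "a \<bullet> x n \<le> b" for n using in_S[of n] hF unfolding S h by blast
    then show ?thesis
      unfolding h using halfspace_eventually_contains_shift[OF _ N dir] by simp
  qed
  then have "\<forall>\<^sub>F n in sequentially. \<forall>h\<in>F. x n - u \<in> h"
    by (intro eventually_ball_finite \<open>finite F\<close> ballI)
  then show ?thesis
    unfolding S by simp
qed

lemma eventually_norm_diff_less:
  fixes x :: "nat \<Rightarrow> 'a::real_inner"
  assumes N: "filterlim N at_top sequentially"
    and dir: "(\<lambda>n. x n /\<^sub>R N n) \<longlonglongrightarrow> u" and "u \<noteq> 0"
  shows "\<forall>\<^sub>F n in sequentially. norm (x n - u) < norm (x n)"
proof -
  have N_pos: "\<forall>\<^sub>F n in sequentially. 0 < N n"
    using N by (simp add: filterlim_at_top_dense)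
  have "(\<lambda>n. (x n /\<^sub>R N n) \<bullet> u) \<longlonglongrightarrow> u \<bullet> u"
    by (intro tendsto_inner tendsto_const dir)
  then have "filterlim (\<lambda>n. (x n /\<^sub>R N n) \<bullet> u * N n) at_top sequentially"
    using \<open>u \<noteq> 0\<close> by (intro filterlim_tendsto_pos_mult_at_top N) auto
  then have "\<forall>\<^sub>F n in sequentially. u \<bullet> u / 2 < (x n /\<^sub>R N n) \<bullet> u * N n"
    unfolding filterlim_at_top_dense by blast
  with N_pos show ?thesis
  proof eventually_elim
    case (elim n)
    then have "u \<bullet> u < 2 * (x n \<bullet> u)" by (simp add: field_simps)
    then have "(norm (x n - u))\<^sup>2 < (norm (x n))\<^sup>2"
      by (simp add: power2_norm_eq_inner inner_diff_left inner_diff_right inner_commute)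
    then show ?case by (rule power_less_imp_less_base) simp
  qed
qed

lemma closed_fibre_attains_min_norm:
  fixes f :: "'a::euclidean_space \<Rightarrow> 'b::t1_space"
  assumes "closed S" "continuous_on S f" "y \<in> f ` S"
  shows "\<exists>x\<in>S. f x = y \<and> (\<forall>z\<in>S. f z = y \<longrightarrow> norm x \<le> norm z)"
proof -
  have "closed {x \<in> S. f x = y}" "{x \<in> S. f x = y} \<noteq> {}"
    using assms by (auto intro: continuous_closed_preimage_constant)
  from distance_attains_inf[OF this, of 0] obtain x where "x \<in> {x \<in> S. f x = y}"
    and "\<And>z. z \<in> {x \<in> S. f x = y} \<Longrightarrow> dist 0 x \<le> dist 0 z"
    by blast
  then show ?thesis by (auto simp: dist_0_norm)
qed

text \<open>Were \<open>u \<noteq> 0\<close>, shifting by \<open>-u\<close> would eventually stay in the polyhedron (\<open>u\<close> is a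
  recession direction) and in the fibre (\<open>f u = 0\<close>) while decreasing the norm.\<close>

lemma polyhedron_min_norm_fibres_direction_zero:
  fixes f :: "'a::euclidean_space \<Rightarrow> 'b::real_normed_vector"
  assumes "polyhedron S" "linear f"
    and in_S: "\<And>n. x n \<in> S"
    and min_norm: "\<And>n z. z \<in> S \<Longrightarrow> f z = f (x n) \<Longrightarrow> norm (x n) \<le> norm z"
    and lim_f: "(\<lambda>n. f (x n)) \<longlonglongrightarrow> l"
    and N: "filterlim N at_top sequentially"
    and dir: "(\<lambda>n. x n /\<^sub>R N n) \<longlonglongrightarrow> u"
  shows "u = 0"
proof (rule ccontr)
  assume "u \<noteq> 0"
  have "bounded_linear f" using \<open>linear f\<close> by (simp add: linear_conv_bounded_linear)
  have "(\<lambda>n. f (x n /\<^sub>R N n)) \<longlonglongrightarrow> f u"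
    using \<open>bounded_linear f\<close> dir by (rule bounded_linear.tendsto)
  moreover have "(\<lambda>n. f (x n /\<^sub>R N n)) \<longlonglongrightarrow> 0 *\<^sub>R l"
    using tendsto_scaleR[OF tendsto_inverse_0_at_top[OF N] lim_f]
    by (simp add: linear_scale[OF \<open>linear f\<close>])
  ultimately have "f u = 0" by (simp add: LIMSEQ_unique)
  have "\<forall>\<^sub>F n in sequentially. False"
    using polyhedron_eventually_contains_shift[OF \<open>polyhedron S\<close> in_S N dir]
      eventually_norm_diff_less[OF N dir \<open>u \<noteq> 0\<close>]
  proof eventually_elim
    case (elim n)
    have "f (x n - u) = f (x n)" by (simp add: linear_diff[OF \<open>linear f\<close>] \<open>f u = 0\<close>)
    with elim show False using min_norm[of "x n - u" n] by simp
  qed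
  then show False by simp
qed

lemma subsequence_converges_or_escapes:
  fixes x :: "nat \<Rightarrow> 'a::euclidean_space"
  obtains (converges) \<phi> x0 where "strict_mono \<phi>" "(\<lambda>n. x (\<phi> n)) \<longlonglongrightarrow> x0"
  | (escapes) \<phi> N u where "strict_mono \<phi>" "filterlim N at_top sequentially"
      "(\<lambda>n. x (\<phi> n) /\<^sub>R N n) \<longlonglongrightarrow> u" "norm u = 1"
proof -
  define N where "N n = 1 + norm (x n)" for n
  define u where "u n = x n /\<^sub>R N n" for n
  have N_pos: "0 < N n" for n
    unfolding N_def by (simp add: add_pos_nonneg)
  have "norm (u n) = 1 - inverse (N n)" for n
    using N_pos[of n] unfolding u_def by (simp add: field_simps) (simp add: N_def)
  then have N_eq: "N n = inverse (1 - norm (u n))" and norm_u: "norm (u n) < 1" for n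
    using N_pos[of n] by simp_all
  then have "bounded (range u)"
    unfolding bounded_iff by (auto intro!: exI[of _ 1] less_imp_le)
  then obtain \<phi> u0 where "strict_mono \<phi>" and "(u \<circ> \<phi>) \<longlonglongrightarrow> u0"
    using bounded_imp_convergent_subsequence by blast
  then have dir: "(\<lambda>n. u (\<phi> n)) \<longlonglongrightarrow> u0" by (simp add: comp_def)
  have norm_lim: "(\<lambda>n. norm (u (\<phi> n))) \<longlonglongrightarrow> norm u0"
    using dir by (rule tendsto_norm)
  have "norm u0 \<le> 1"
    by (rule LIMSEQ_le_const2[OF norm_lim]) (simp add: less_imp_le norm_u)
  then consider "norm u0 < 1" | "norm u0 = 1" by linarith
  then show thesis
  proof cases
    case 1
    then have "(\<lambda>n. N (\<phi> n)) \<longlonglongrightarrow> inverse (1 - norm u0)"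
      unfolding N_eq by (intro tendsto_inverse tendsto_diff tendsto_const norm_lim) simp
    from tendsto_scaleR[OF this dir] have "(\<lambda>n. x (\<phi> n)) \<longlonglongrightarrow> u0 /\<^sub>R (1 - norm u0)"
      using N_pos by (simp add: u_def less_imp_neq[THEN not_sym])
    with \<open>strict_mono \<phi>\<close> show thesis by (rule converges)
  next
    case 2
    have "(\<lambda>n. 1 - norm (u (\<phi> n))) \<longlonglongrightarrow> 0"
      using tendsto_diff[OF tendsto_const norm_lim, of 1] 2 by simp
    then have "filterlim (\<lambda>n. N (\<phi> n)) at_top sequentially"
      unfolding N_eq using norm_u by (intro filterlim_inverse_at_top) simp_all
    moreover have "(\<lambda>n. x (\<phi> n) /\<^sub>R N (\<phi> n)) \<longlonglongrightarrow> u0"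
      using dir by (simp add: u_def)
    ultimately show thesis by (rule escapes[OF \<open>strict_mono \<phi>\<close> _ _ 2])
  qed
qed

lemma closed_linear_image_polyhedron:
  fixes f :: "'a::euclidean_space \<Rightarrow> 'b::real_normed_vector"
  assumes "polyhedron S" "linear f"
  shows "closed (f ` S)"
  unfolding closed_sequential_limits
proof (intro allI impI, elim conjE)
  fix y l assume y_in: "\<forall>n. y n \<in> f ` S" and y_lim: "y \<longlonglongrightarrow> l"
  have "closed S" using \<open>polyhedron S\<close> by (rule polyhedron_imp_closed)
  have f_cont: "isCont f x" for x
    using \<open>linear f\<close> by (simp add: linear_conv_bounded_linear linear_continuous_at)
  then have "continuous_on S f" by (simp add: continuous_at_imp_continuous_on)
  with y_in have "\<exists>x\<in>S. f x = y n \<and> (\<forall>z\<in>S. f z = y n \<longrightarrow> norm x \<le> norm z)" for n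
    by (intro closed_fibre_attains_min_norm[OF \<open>closed S\<close>]) auto
  then have "\<forall>n. \<exists>x. x \<in> S \<and> f x = y n \<and> (\<forall>z\<in>S. f z = y n \<longrightarrow> norm x \<le> norm z)"
    by blast
  then obtain x
    where "\<forall>n. x n \<in> S \<and> f (x n) = y n \<and> (\<forall>z\<in>S. f z = y n \<longrightarrow> norm (x n) \<le> norm z)"
    by (rule choice[THEN exE])
  then have in_S: "\<And>n. x n \<in> S" and fx: "\<And>n. f (x n) = y n"
    and min_norm: "\<And>n z. z \<in> S \<Longrightarrow> f z = f (x n) \<Longrightarrow> norm (x n) \<le> norm z"
    by auto
  have fx_sub: "(\<lambda>n. f (x (\<phi> n))) \<longlonglongrightarrow> l" if "strict_mono \<phi>" for \<phi>
    using LIMSEQ_subseq_LIMSEQ[OF y_lim that] by (simp add: fx comp_def)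
  show "l \<in> f ` S"
  proof (cases x rule: subsequence_converges_or_escapes)
    case (converges \<phi> x0)
    have "x0 \<in> S"
      by (rule closed_sequentially[OF \<open>closed S\<close> _ converges(2)]) (simp add: in_S)
    moreover have "f x0 = l"
      using isCont_tendsto_compose[OF f_cont converges(2)] fx_sub[OF converges(1)]
      by (rule LIMSEQ_unique)
    ultimately show ?thesis by (rule rev_image_eqI[OF _ sym])
  next
    case (escapes \<phi> N u)
    have "u = 0"
      using polyhedron_min_norm_fibres_direction_zero[OF assms, where x = "\<lambda>n. x (\<phi> n)"]
        in_S min_norm fx_sub[OF escapes(1)] escapes(2,3) by simp
    with \<open>norm u = 1\<close> show ?thesis by simp
  qed
qed

lemma polyhedron_linear_attains_inf:
  fixes f :: "'a::euclidean_space \<Rightarrow> real"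
  assumes "polyhedron S" "linear f" "S \<noteq> {}" "bdd_below (f ` S)"
  shows "\<exists>x\<in>S. \<forall>y\<in>S. f x \<le> f y"
proof -
  have "Inf (f ` S) \<in> f ` S"
    using assms closed_linear_image_polyhedron by (intro closed_contains_Inf) auto
  then obtain x where "x \<in> S" "f x = Inf (f ` S)" by (metis imageE)
  then show ?thesis using cInf_lower[OF imageI \<open>bdd_below (f ` S)\<close>] by metis
qed

lemma polyhedron_linear_vimage:
  fixes f :: "'a::euclidean_space \<Rightarrow> 'b::euclidean_space"
  assumes "polyhedron S" "linear f"
  shows "polyhedron (f -` S)"
proof -
  obtain F where "finite F" and S: "S = \<Inter> F"
    and halfspaces: "\<And>h. h \<in> F \<Longrightarrow> \<exists>a b. h = {x. a \<bullet> x \<le> b}"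
    using \<open>polyhedron S\<close> unfolding polyhedron_def by metis
  have "polyhedron (f -` h)" if "h \<in> F" for h
  proof -
    obtain a b where h: "h = {x. a \<bullet> x \<le> b}" using halfspaces[OF \<open>h \<in> F\<close>] by blast
    have "f -` h = {x. adjoint f a \<bullet> x \<le> b}"
      unfolding h by (simp add: adjoint_works[OF \<open>linear f\<close>] inner_commute)
    then show ?thesis by (simp add: polyhedron_halfspace_le)
  qed
  moreover have "f -` S = \<Inter> ((vimage f) ` F)" unfolding S by auto
  ultimately show ?thesis using \<open>finite F\<close> by auto
qed

lemma polyhedron_max_affine_attains_inf:
  fixes a :: "'j \<Rightarrow> 'a::euclidean_space" and b :: "'j \<Rightarrow> real"
  assumes "polyhedron V" "V \<noteq> {}" "finite K"
  shows "\<exists>v\<in>V. \<exists>r\<ge>0. (\<forall>j\<in>K. a j \<bullet> v + b j \<le> r) \<and>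
    (\<forall>v'\<in>V. \<forall>r'\<ge>0. (\<forall>j\<in>K. a j \<bullet> v' + b j \<le> r') \<longrightarrow> r \<le> r')"
proof -
  define Q where "Q = fst -` V \<inter> {p. (0::'a, -1::real) \<bullet> p \<le> 0}
    \<inter> (\<Inter>j\<in>K. {p. (a j, -1::real) \<bullet> p \<le> - b j})"
  have "(a j, -1::real) \<bullet> (v, r) \<le> - b j \<longleftrightarrow> a j \<bullet> v + b j \<le> r" for j v r
    by (simp add: inner_Pair) linarith
  then have Q_iff: "(v, r) \<in> Q \<longleftrightarrow> v \<in> V \<and> 0 \<le> r \<and> (\<forall>j\<in>K. a j \<bullet> v + b j \<le> r)" for v r
    unfolding Q_def by (simp add: inner_Pair)
  have "polyhedron (fst -` V :: ('a \<times> real) set)"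
    using \<open>polyhedron V\<close> bounded_linear.linear[OF bounded_linear_fst]
    by (rule polyhedron_linear_vimage)
  moreover have "polyhedron (\<Inter>j\<in>K. {p. (a j, -1::real) \<bullet> p \<le> - b j})"
    using \<open>finite K\<close> by (intro polyhedron_Inter) (auto simp: polyhedron_halfspace_le)
  ultimately have "polyhedron Q"
    unfolding Q_def by (intro polyhedron_Int polyhedron_halfspace_le)
  obtain v0 where "v0 \<in> V" using \<open>V \<noteq> {}\<close> by blast
  have "a j \<bullet> v0 + b j \<le> (\<Sum>k\<in>K. \<bar>a k \<bullet> v0 + b k\<bar>)" if "j \<in> K" for j
    using member_le_sum[OF that _ \<open>finite K\<close>, of "\<lambda>k. \<bar>a k \<bullet> v0 + b k\<bar>"] by simp
  then have "(v0, \<Sum>k\<in>K. \<bar>a k \<bullet> v0 + b k\<bar>) \<in> Q"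
    using \<open>v0 \<in> V\<close> by (simp add: Q_iff sum_nonneg)
  then have "Q \<noteq> {}" by blast
  moreover have "bdd_below (snd ` Q)"
    by (rule bdd_belowI[of _ 0]) (auto simp: Q_iff)
  ultimately obtain p where "p \<in> Q" and p_min: "\<And>q. q \<in> Q \<Longrightarrow> snd p \<le> snd q"
    using polyhedron_linear_attains_inf[OF \<open>polyhedron Q\<close> bounded_linear.linear[OF bounded_linear_snd]]
    by metis
  obtain v r where p: "p = (v, r)" by (cases p)
  have "r \<le> r'" if "v' \<in> V" "0 \<le> r'" "\<forall>j\<in>K. a j \<bullet> v' + b j \<le> r'" for v' r'
    using p_min[of "(v', r')"] that by (simp add: Q_iff p)
  with \<open>p \<in> Q\<close> show ?thesis
    unfolding p Q_iff by blast
qed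

lemma cball_subset_halfspace_iff:
  fixes a v :: "'a::real_inner"
  assumes "a \<noteq> 0" "0 \<le> r"
  shows "cball v r \<subseteq> {x. a \<bullet> x \<le> b} \<longleftrightarrow> r \<le> (b - a \<bullet> v) / norm a"
proof
  assume sub: "cball v r \<subseteq> {x. a \<bullet> x \<le> b}"
  have "v + (r / norm a) *\<^sub>R a \<in> cball v r"
    using assms by (simp add: dist_norm)
  with sub have "a \<bullet> v + r * norm a \<le> b"
    using \<open>a \<noteq> 0\<close> by (auto simp: inner_add_right dot_square_norm power2_eq_square)
  then show "r \<le> (b - a \<bullet> v) / norm a"
    using \<open>a \<noteq> 0\<close> by (simp add: pos_le_divide_eq)
next
  assume "r \<le> (b - a \<bullet> v) / norm a"
  then have r_le: "norm a * r \<le> b - a \<bullet> v"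
    using \<open>a \<noteq> 0\<close> by (simp add: pos_le_divide_eq mult.commute)
  show "cball v r \<subseteq> {x. a \<bullet> x \<le> b}"
  proof
    fix x assume "x \<in> cball v r"
    then have "norm (x - v) \<le> r" by (simp add: dist_norm norm_minus_commute)
    have "a \<bullet> x = a \<bullet> v + a \<bullet> (x - v)" by (simp add: inner_diff_right)
    also have "\<dots> \<le> a \<bullet> v + norm a * norm (x - v)" using norm_cauchy_schwarz by simp
    also have "\<dots> \<le> a \<bullet> v + norm a * r"
      using \<open>norm (x - v) \<le> r\<close> by (simp add: mult_left_mono)
    finally show "x \<in> {x. a \<bullet> x \<le> b}" using r_le by simp
  qed
qed

lemma Sup_ereal_eq_Inf_ereal_complement:
  fixes A :: "real set"
  assumes "0 \<in> A" and down: "\<And>a b. a \<in> A \<Longrightarrow> 0 \<le> b \<Longrightarrow> b \<le> a \<Longrightarrow> b \<in> A"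
  shows "Sup (ereal ` A) = Inf (ereal ` ({0..} - A))"
proof (rule antisym)
  show "Sup (ereal ` A) \<le> Inf (ereal ` ({0..} - A))"
  proof (intro Sup_least Inf_greatest)
    fix x y assume "x \<in> ereal ` A" "y \<in> ereal ` ({0..} - A)"
    then show "x \<le> y"
      using down by (force simp: not_le[symmetric])
  qed
  show "Inf (ereal ` ({0..} - A)) \<le> Sup (ereal ` A)"
  proof (rule ccontr)
    assume "\<not> ?thesis"
    then obtain z where z_gt: "Sup (ereal ` A) < z" and z_lt: "z < Inf (ereal ` ({0..} - A))"
      using dense not_le by metis
    have "ereal 0 \<le> Sup (ereal ` A)" using \<open>0 \<in> A\<close> by (simp add: Sup_upper)
    then have "z \<noteq> -\<infinity>" "z \<noteq> \<infinity>" using z_gt z_lt by auto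
    then obtain r where z: "z = ereal r" by (cases z) auto
    have "ereal 0 < z" using \<open>ereal 0 \<le> Sup (ereal ` A)\<close> z_gt by (rule order.strict_trans1)
    then have "0 \<le> r" using z by simp
    show False
    proof (cases "r \<in> A")
      case True
      then show False using z_gt z by (simp add: Sup_upper leD)
    next
      case False
      then have "Inf (ereal ` ({0..} - A)) \<le> ereal r" using \<open>0 \<le> r\<close> by (simp add: Inf_lower)
      then show False using z_lt z by simp
    qed
  qed
qed

lemma Inf_ereal_eq_if_approx:
  fixes B T :: "real set"
  assumes "B \<subseteq> T" and approx: "\<And>t t'. t \<in> T \<Longrightarrow> t < t' \<Longrightarrow> \<exists>r\<in>B. r \<le> t'"
  shows "Inf (ereal ` B) = Inf (ereal ` T)"
proof (rule antisym)
  have "Inf (ereal ` B) \<le> ereal t" if "t \<in> T" for t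
  proof (rule dense_ge)
    fix y assume "ereal t < y"
    show "Inf (ereal ` B) \<le> y"
    proof (cases y)
      case (real t')
      with \<open>ereal t < y\<close> have "t < t'" by simp
      then obtain r where "r \<in> B" "r \<le> t'" using approx[OF \<open>t \<in> T\<close>] by blast
      then show ?thesis unfolding real by (intro Inf_lower2[of "ereal r"]) auto
    next
      case PInf
      then show ?thesis by simp
    next
      case MInf
      with \<open>ereal t < y\<close> show ?thesis by simp
    qed
  qed
  then show "Inf (ereal ` B) \<le> Inf (ereal ` T)"
    by (auto intro: Inf_greatest)
  show "Inf (ereal ` T) \<le> Inf (ereal ` B)"
    using \<open>B \<subseteq> T\<close> by (simp add: Inf_superset_mono image_mono)
qed

definition failing_radii :: "('c \<Rightarrow> 'v \<Rightarrow> real) \<Rightarrow> 'v set \<Rightarrow> nat \<Rightarrow> real set" where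
  "failing_radii d V q = {r. 0 \<le> r \<and> (\<exists>v\<in>V. card {j. r \<le> d j v} < q)}"

text \<open>For large \<open>M\<close>, \<open>\<delta> j = 1\<close> forces \<open>r \<le> d j v\<close> and \<open>\<delta> j = 0\<close> forces \<open>d j v < r\<close>.\<close>

definition big_M_feasible :: "('c::finite \<Rightarrow> 'v \<Rightarrow> real) \<Rightarrow> 'v set \<Rightarrow> nat \<Rightarrow> real \<Rightarrow> real \<Rightarrow> bool"
  where "big_M_feasible d V q M r \<longleftrightarrow> 0 \<le> r \<and> (\<exists>v\<in>V. \<exists>\<delta> :: 'c \<Rightarrow> real. (\<forall>j. \<delta> j \<in> {0, 1}) \<and>
    (\<forall>j. d j v - M * \<delta> j < r \<and> r \<le> d j v + M * (1 - \<delta> j)) \<and> (\<Sum>j\<in>UNIV. \<delta> j) < real q)"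

lemma sum_zero_one_eq_card:
  fixes \<delta> :: "'c::finite \<Rightarrow> real"
  assumes "\<And>j. \<delta> j \<in> {0, 1}"
  shows "(\<Sum>j\<in>UNIV. \<delta> j) = real (card {j. \<delta> j = 1})"
proof -
  have "(\<Sum>j\<in>UNIV. \<delta> j) = (\<Sum>j\<in>UNIV. if \<delta> j = 1 then 1 else 0)"
    by (rule sum.cong) (use assms in auto)
  also have "\<dots> = real (card {j. \<delta> j = 1})" by (simp add: sum.If_cases)
  finally show ?thesis .
qed

lemma big_M_feasible_imp_failing:
  assumes "big_M_feasible d V q M r"
  shows "r \<in> failing_radii d V q"
proof -
  obtain v \<delta> where "0 \<le> r" "v \<in> V" and \<delta>01: "\<And>j. \<delta> j \<in> {0, 1}"
    and bounds: "\<And>j. d j v - M * \<delta> j < r \<and> r \<le> d j v + M * (1 - \<delta> j)"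
    and "(\<Sum>j\<in>UNIV. \<delta> j) < real q"
    using assms unfolding big_M_feasible_def by blast
  have "\<delta> j = 1" if "r \<le> d j v" for j
    using \<delta>01[of j] bounds[of j] that by auto
  then have "{j. r \<le> d j v} \<subseteq> {j. \<delta> j = 1}" by blast
  then have "card {j. r \<le> d j v} \<le> card {j. \<delta> j = 1}" by (simp add: card_mono)
  also have "\<dots> < q"
    using \<open>(\<Sum>j\<in>UNIV. \<delta> j) < real q\<close> by (simp add: sum_zero_one_eq_card[OF \<delta>01])
  finally show ?thesis
    unfolding failing_radii_def using \<open>0 \<le> r\<close> \<open>v \<in> V\<close> by blast
qed

lemma big_M_feasible_below:
  fixes d :: "'c::finite \<Rightarrow> 'v \<Rightarrow> real"
  assumes nonneg: "\<And>j v. v \<in> V \<Longrightarrow> 0 \<le> d j v"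
    and vK_in: "\<And>K. vK K \<in> V" and rK_nonneg: "\<And>K. 0 \<le> rK K"
    and vK_le: "\<And>K j. j \<in> K \<Longrightarrow> d j (vK K) \<le> rK K"
    and rK_min: "\<And>K v r. v \<in> V \<Longrightarrow> 0 \<le> r \<Longrightarrow> \<forall>j\<in>K. d j v \<le> r \<Longrightarrow> rK K \<le> r"
    and rK_less: "\<And>K. rK K < M" and d_less: "\<And>K j. d j (vK K) < M"
    and "t \<in> failing_radii d V q" "t < t'"
  shows "\<exists>r\<le>t'. big_M_feasible d V q M r"
proof -
  obtain v where "v \<in> V" "0 \<le> t" and few: "card {j. t \<le> d j v} < q"
    using \<open>t \<in> failing_radii d V q\<close> unfolding failing_radii_def by blast
  define K where "K = {j. d j v < t}"
  have "rK K \<le> t"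
    by (rule rK_min[OF \<open>v \<in> V\<close> \<open>0 \<le> t\<close>]) (simp add: K_def less_imp_le)
  define r where "r = min t' M"
  have "0 \<le> r" "r \<le> M" "r \<le> t'" "rK K < r"
    unfolding r_def using \<open>rK K \<le> t\<close> \<open>t < t'\<close> rK_nonneg[of K] rK_less[of K] by auto
  define \<delta> :: "'c \<Rightarrow> real" where "\<delta> j = (if r \<le> d j (vK K) then 1 else 0)" for j
  have \<delta>01: "\<And>j. \<delta> j \<in> {0, 1}" unfolding \<delta>_def by simp
  have "j \<notin> K" if "\<delta> j = 1" for j
  proof
    assume "j \<in> K"
    then have "d j (vK K) < r" using vK_le \<open>rK K < r\<close> by (meson le_less_trans)
    with that show False by (simp add: \<delta>_def)
  qed
  then have "{j. \<delta> j = 1} \<subseteq> {j. t \<le> d j v}" by (auto simp: K_def not_less)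
  then have "card {j. \<delta> j = 1} < q"
    using few by (meson card_mono finite le_less_trans)
  then have "(\<Sum>j\<in>UNIV. \<delta> j) < real q"
    by (simp add: sum_zero_one_eq_card[OF \<delta>01])
  moreover have "d j (vK K) - M * \<delta> j < r \<and> r \<le> d j (vK K) + M * (1 - \<delta> j)" for j
  proof (cases "r \<le> d j (vK K)")
    case True
    then show ?thesis using d_less[where K = K and j = j] \<open>0 \<le> r\<close> by (simp add: \<delta>_def)
  next
    case False
    then show ?thesis using nonneg[OF vK_in[of K], of j] \<open>r \<le> M\<close> by (simp add: \<delta>_def)
  qed
  ultimately have "big_M_feasible d V q M r"
    unfolding big_M_feasible_def using \<open>0 \<le> r\<close> vK_in \<delta>01 by blast
  with \<open>r \<le> t'\<close> show ?thesis by blast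
qed

lemma big_M_Inf_eq:
  fixes d :: "'c::finite \<Rightarrow> 'v \<Rightarrow> real"
  assumes nonneg: "\<And>j v. v \<in> V \<Longrightarrow> 0 \<le> d j v"
    and attained: "\<And>K. \<exists>v\<in>V. \<exists>r\<ge>0. (\<forall>j\<in>K. d j v \<le> r) \<and>
      (\<forall>v'\<in>V. \<forall>r'\<ge>0. (\<forall>j\<in>K. d j v' \<le> r') \<longrightarrow> r \<le> r')"
  shows "\<exists>M0>0. \<forall>M\<ge>M0.
    Inf (ereal ` Collect (big_M_feasible d V q M)) = Inf (ereal ` failing_radii d V q)"
proof -
  from attained have "\<forall>K. \<exists>v r. v \<in> V \<and> 0 \<le> r \<and> (\<forall>j\<in>K. d j v \<le> r) \<and>
      (\<forall>v'\<in>V. \<forall>r'\<ge>0. (\<forall>j\<in>K. d j v' \<le> r') \<longrightarrow> r \<le> r')"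
    by blast
  then obtain vK rK where "\<And>K. vK K \<in> V \<and> 0 \<le> rK K \<and> (\<forall>j\<in>K. d j (vK K) \<le> rK K) \<and>
      (\<forall>v'\<in>V. \<forall>r'\<ge>0. (\<forall>j\<in>K. d j v' \<le> r') \<longrightarrow> rK K \<le> r')"
    by metis
  then have vK_in: "\<And>K. vK K \<in> V" and rK_nonneg: "\<And>K. 0 \<le> rK K"
    and vK_le: "\<And>K j. j \<in> K \<Longrightarrow> d j (vK K) \<le> rK K"
    and rK_min: "\<And>K v r. v \<in> V \<Longrightarrow> 0 \<le> r \<Longrightarrow> \<forall>j\<in>K. d j v \<le> r \<Longrightarrow> rK K \<le> r"
    by blast+
  define M0 where "M0 = 1 + (\<Sum>K\<in>UNIV. rK K + (\<Sum>j\<in>UNIV. d j (vK K)))"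
  have d_sum: "d j (vK K) \<le> (\<Sum>j\<in>UNIV. d j (vK K))" for K j
    using nonneg[OF vK_in] by (intro member_le_sum) auto
  have sum_le: "rK K + (\<Sum>j\<in>UNIV. d j (vK K)) \<le> (\<Sum>K\<in>UNIV. rK K + (\<Sum>j\<in>UNIV. d j (vK K)))" for K
    by (intro member_le_sum) (auto intro!: add_nonneg_nonneg sum_nonneg rK_nonneg nonneg vK_in)
  have rK_less: "rK K < M0" for K
  proof -
    have "0 \<le> (\<Sum>j\<in>UNIV. d j (vK K))" by (simp add: sum_nonneg nonneg vK_in)
    then show ?thesis using sum_le[of K] unfolding M0_def by linarith
  qed
  have d_less: "d j (vK K) < M0" for K j
    using sum_le[of K] d_sum[where K = K and j = j] rK_nonneg[of K] unfolding M0_def by linarith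
  show ?thesis
  proof (intro exI[of _ M0] conjI allI impI)
    show "0 < M0" using rK_less[of "{}"] rK_nonneg[of "{}"] by linarith
    fix M assume "M0 \<le> M"
    show "Inf (ereal ` Collect (big_M_feasible d V q M)) = Inf (ereal ` failing_radii d V q)"
    proof (rule Inf_ereal_eq_if_approx)
      show "Collect (big_M_feasible d V q M) \<subseteq> failing_radii d V q"
        using big_M_feasible_imp_failing by blast
      have M_bounds: "rK K < M" "d j (vK K) < M" for K j
        using rK_less[of K] d_less[where K = K and j = j] \<open>M0 \<le> M\<close> by linarith+
      show "\<exists>r\<in>Collect (big_M_feasible d V q M). r \<le> t'"
        if "t \<in> failing_radii d V q" "t < t'" for t t'
      proof -
        have "\<exists>r\<le>t'. big_M_feasible d V q M r"
          by (rule big_M_feasible_below[where vK = vK and rK = rK and t = t])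
            (use nonneg vK_in rK_nonneg vK_le rK_min M_bounds that in auto)
        then show ?thesis by auto
      qed
    qed
  qed
qed

definition slack :: "real^'x^'c \<Rightarrow> real^'z^'c \<Rightarrow> real^'c \<Rightarrow> 'c \<Rightarrow> (real^'x) \<times> (real^'z) \<Rightarrow> real"
  where "slack S G w j v = (w $ j - Hbar_row S G j \<bullet> v) / norm (Hbar_row S G j)"

lemma Hbar_row_nonzero: "G $ j \<noteq> 0 \<Longrightarrow> Hbar_row S G j \<noteq> 0"
  by (simp add: Hbar_row_def zero_prod_def)

lemma slack_nonneg: "v \<in> Vset S G w \<Longrightarrow> 0 \<le> slack S G w j v"
  by (simp add: slack_def Vset_def)

lemma cball_subset_Vj_iff:
  assumes "G $ j \<noteq> 0" "0 \<le> r"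
  shows "cball v r \<subseteq> Vj S G w j \<longleftrightarrow> r \<le> slack S G w j v"
  unfolding Vj_def slack_def
  using cball_subset_halfspace_iff[OF Hbar_row_nonzero[OF assms(1)] assms(2)] .

lemma polyhedron_Vset: "polyhedron (Vset S G w)"
proof -
  have "Vset S G w = (\<Inter>j. {v. Hbar_row S G j \<bullet> v \<le> w $ j})"
    by (auto simp: Vset_def)
  then show ?thesis by (auto simp: polyhedron_halfspace_le)
qed

lemma slack_max_attains_inf:
  assumes "Vset S G w \<noteq> {}"
  shows "\<exists>v\<in>Vset S G w. \<exists>r\<ge>0. (\<forall>j\<in>K. slack S G w j v \<le> r) \<and>
    (\<forall>v'\<in>Vset S G w. \<forall>r'\<ge>0. (\<forall>j\<in>K. slack S G w j v' \<le> r') \<longrightarrow> r \<le> r')"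
proof -
  define a where "a j = - (Hbar_row S G j /\<^sub>R norm (Hbar_row S G j))" for j
  define b where "b j = w $ j / norm (Hbar_row S G j)" for j
  have slack_eq: "slack S G w j v = a j \<bullet> v + b j" for j v
    by (simp add: slack_def a_def b_def divide_inverse_commute right_diff_distrib)
  show ?thesis
    unfolding slack_eq using polyhedron_max_affine_attains_inf[OF polyhedron_Vset assms finite] .
qed

lemma sigma_eq_Inf_failing_radii:
  fixes S :: "real^'x^'c" and G :: "real^'z^'c" and w :: "real^'c"
  assumes "\<forall>j. G $ j \<noteq> 0" "Vset S G w \<noteq> {}"
  shows "sigma S G w i = Inf (ereal ` failing_radii (slack S G w) (Vset S G w) (CARD('c) - i))"
proof -
  let ?V = "Vset S G w" and ?q = "CARD('c) - i"
  define A where "A = {r. 0 \<le> r \<and> (\<forall>v\<in>?V. ?q \<le> card {j. r \<le> slack S G w j v})}"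
  have cINF_iff: "?q \<le> (INF v\<in>?V. card {j. cball v r \<subseteq> Vj S G w j})
      \<longleftrightarrow> (\<forall>v\<in>?V. ?q \<le> card {j. r \<le> slack S G w j v})" if "0 \<le> r" for r
  proof -
    have "bdd_below ((\<lambda>v. card {j. cball v r \<subseteq> Vj S G w j}) ` ?V)"
      by (rule bdd_belowI[of _ 0]) simp
    with assms(2) have "?q \<le> (INF v\<in>?V. card {j. cball v r \<subseteq> Vj S G w j})
        \<longleftrightarrow> (\<forall>v\<in>?V. ?q \<le> card {j. cball v r \<subseteq> Vj S G w j})"
      by (rule le_cINF_iff)
    moreover have "{j. cball v r \<subseteq> Vj S G w j} = {j. r \<le> slack S G w j v}" for v
      by (rule Collect_cong) (rule cball_subset_Vj_iff[OF assms(1)[rule_format] that])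
    ultimately show ?thesis by (simp only:)
  qed
  have "sigma S G w i = Sup (ereal ` A)"
    unfolding sigma_def A_def by (simp cong: conj_cong add: cINF_iff image_Collect)
  also have "\<dots> = Inf (ereal ` ({0..} - A))"
  proof (rule Sup_ereal_eq_Inf_ereal_complement)
    show "0 \<in> A" by (simp add: A_def slack_nonneg)
    show "b \<in> A" if "a \<in> A" "0 \<le> b" "b \<le> a" for a b
    proof -
      have "card {j. a \<le> slack S G w j v} \<le> card {j. b \<le> slack S G w j v}" for v
        using \<open>b \<le> a\<close> by (intro card_mono) auto
      moreover have "?q \<le> card {j. a \<le> slack S G w j v}" if "v \<in> ?V" for v
        using \<open>a \<in> A\<close> that by (simp add: A_def)
      ultimately show ?thesis
        using \<open>0 \<le> b\<close> unfolding A_def by (blast intro: le_trans)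
    qed
  qed
  also have "{0..} - A = failing_radii (slack S G w) ?V ?q"
    by (auto simp: A_def failing_radii_def not_le)
  finally show ?thesis .
qed

lemma milp_val_eq_Inf_big_M_feasible:
  fixes S :: "real^'x^'c" and G :: "real^'z^'c" and w :: "real^'c"
  shows "milp_val S G w i M
    = Inf (ereal ` Collect (big_M_feasible (slack S G w) (Vset S G w) (CARD('c) - i) M))"
  unfolding milp_val_def big_M_feasible_def slack_def
  by (rule arg_cong[where f = Inf]) auto

theorem lemma7:
  fixes S :: "real^'x^'c" and G :: "real^'z^'c" and w :: "real^'c" and i :: nat
  assumes "\<forall>j. G $ j \<noteq> 0"
    and "Vset S G w \<noteq> {}"
    and "1 \<le> i" and "i \<le> CARD('c)"
  shows "\<exists>M0>0. \<forall>M\<ge>M0. sigma S G w i = milp_val S G w i M"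
proof -
  \<comment> \<open>The argument works for every \<open>i\<close>.\<close>
  obtain M0 where "M0 > 0" and "\<forall>M\<ge>M0.
      Inf (ereal ` Collect (big_M_feasible (slack S G w) (Vset S G w) (CARD('c) - i) M))
    = Inf (ereal ` failing_radii (slack S G w) (Vset S G w) (CARD('c) - i))"
    using big_M_Inf_eq[OF slack_nonneg slack_max_attains_inf[OF assms(2)]] by blast
  then show ?thesis
    unfolding sigma_eq_Inf_failing_radii[OF assms(1,2)] milp_val_eq_Inf_big_M_feasible by auto
qed

end
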